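(* Let $d=2$, $n\ge 2$, $\varepsilon=1/256$, and let $f$ be a stable update function. There exists $K>0$ (depending on $n$ and $f$) such that for every configuration $\mathcal U^{(0)}$ of $n$ opinions in $\mathbb S^1$ which is $\varepsilon$-inactive but active, there exists a sequence of at most $K$ interventions after which the resulting configuration is strictly convex.
   Context: Opinions are unit vectors in $\mathbb R^d$; a configuration is an $n$-tuple $(\vec u_1,\dots,\vec u_n)$ and $A_{ij}=\langle\vec u_i,\vec u_j\rangle$. An intervention $(i,j)$, $i\ne j$, replaces $\vec u_i$ by $\vec w/\|\vec w\|$ with $\vec w=\vec u_i+f(A_{ij})\vec u_j$, leaving others unchanged. $f:[-1,1]\to\mathbb R$ is stable if continuous and $\operatorname{sign}f(A)=\operatorname{sign}A$ for all $A$. For $0\le\varepsilon<1$, a configuration is $\varepsilon$-active if there exist $i,j$ with $\varepsilon<|A_{ij}|<1-\varepsilon$, and $\varepsilon$-inactive otherwise; "active" means $0$-active. Strictly convex: there exist $b_1,\dots,b_n\in\{\pm1\}$ with $\langle b_i\vec u_i,b_j\vec u_j\rangle>0$ for all $i,j$. *)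

theory Defs
  imports "HOL-Analysis.Analysis"
begin

text \<open>Opinions in the unit circle S^1 of R^2; a configuration of n opinions is a map
  from indices {0..<n} to vectors (values at indices \<ge> n are irrelevant).\<close>

type_synonym config = "nat \<Rightarrow> real ^ 2"

definition is_config :: "nat \<Rightarrow> config \<Rightarrow> bool" where
  "is_config n U \<longleftrightarrow> (\<forall>i<n. norm (U i) = 1)"

definition stable :: "(real \<Rightarrow> real) \<Rightarrow> bool" where
  "stable f \<longleftrightarrow> continuous_on {-1..1} f \<and> (\<forall>A\<in>{-1..1}. sgn (f A) = sgn A)"

definition intervene :: "(real \<Rightarrow> real) \<Rightarrow> config \<Rightarrow> nat \<times> nat \<Rightarrow> config" where
  "intervene f U ij = (let i = fst ij; j = snd ij;
      w = U i + f (U i \<bullet> U j) *\<^sub>R U j in U(i := w /\<^sub>R norm w))"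

definition valid_intervention :: "nat \<Rightarrow> nat \<times> nat \<Rightarrow> bool" where
  "valid_intervention n ij \<longleftrightarrow> fst ij < n \<and> snd ij < n \<and> fst ij \<noteq> snd ij"

definition apply_interventions :: "(real \<Rightarrow> real) \<Rightarrow> config \<Rightarrow> (nat \<times> nat) list \<Rightarrow> config" where
  "apply_interventions f U s = foldl (intervene f) U s"

definition eps_active :: "real \<Rightarrow> nat \<Rightarrow> config \<Rightarrow> bool" where
  "eps_active \<epsilon> n U \<longleftrightarrow>
     (\<exists>i<n. \<exists>j<n. \<epsilon> < \<bar>U i \<bullet> U j\<bar> \<and> \<bar>U i \<bullet> U j\<bar> < 1 - \<epsilon>)"

definition eps_inactive :: "real \<Rightarrow> nat \<Rightarrow> config \<Rightarrow> bool" where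
  "eps_inactive \<epsilon> n U \<longleftrightarrow> \<not> eps_active \<epsilon> n U"

definition active :: "nat \<Rightarrow> config \<Rightarrow> bool" where
  "active n U \<longleftrightarrow> eps_active 0 n U"

definition strictly_convex :: "nat \<Rightarrow> config \<Rightarrow> bool" where
  "strictly_convex n U \<longleftrightarrow> (\<exists>b :: nat \<Rightarrow> real. (\<forall>i<n. b i = 1 \<or> b i = -1) \<and>
     (\<forall>i<n. \<forall>j<n. (b i *\<^sub>R U i) \<bullet> (b j *\<^sub>R U j) > 0))"

end

theory Submission
  imports Defs
begin

text \<open>
  In an \<open>\<epsilon>\<close>-inactive configuration every \<open>|\<langle>u\<^sub>i, u\<^sub>0\<rangle>|\<close> is at most 1/256 or at least
  255/256, which splits the opinions into two clusters inside each of which all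
  \<open>|\<langle>u\<^sub>i, u\<^sub>j\<rangle>|\<close> are at least 1/2. If the second cluster is empty the configuration is
  already strictly convex. Otherwise choose \<open>p\<close>, \<open>q\<close> in different clusters with
  \<open>g = |\<langle>u\<^sub>p, u\<^sub>q\<rangle>|\<close> maximal; activity forces \<open>g > 0\<close>, and every opinion has squared sine at
  most \<open>4g\<^sup>2\<close> to the anchor \<open>u\<^sub>p\<close> or \<open>u\<^sub>q\<close> of its cluster. Since \<open>|f| \<ge> c > 0\<close> on
  \<open>1/2 \<le> |A| \<le> 1\<close>, one intervention towards the anchor divides that squared sine by at
  least \<open>1 + c\<^sup>2\<close>, so a fixed number \<open>k\<close> of them brings it below \<open>g\<^sup>2/16\<close>. Then, up to sign,
  every opinion is within sine \<open>g/4\<close> of an anchor while the suitably oriented anchors have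
  cosine \<open>g\<close>, and all pairwise inner products are positive. Hence \<open>K = n k\<close> works.
\<close>

lemma inner_vec2: "(x::real^2) \<bullet> y = x$1 * y$1 + x$2 * y$2"
  by (simp add: inner_vec_def sum_2)

text \<open>For unit vectors, \<open>det2 t x\<close> is the sine of the oriented angle from \<open>t\<close> to \<open>x\<close>.\<close>

definition det2 :: "real^2 \<Rightarrow> real^2 \<Rightarrow> real" where
  "det2 x y = x$1 * y$2 - x$2 * y$1"

lemma det2_self [simp]: "det2 x x = 0"
  by (simp add: det2_def)

lemma det2_scaleR_left [simp]: "det2 (a *\<^sub>R x) y = a * det2 x y"
  and det2_scaleR_right [simp]: "det2 x (a *\<^sub>R y) = a * det2 x y"
  and det2_add_right [simp]: "det2 x (y + z) = det2 x y + det2 x z"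
  by (simp_all add: det2_def algebra_simps)

lemma inner_sq_add_det2_sq: "x \<bullet> x = 1 \<Longrightarrow> t \<bullet> t = 1 \<Longrightarrow> (x \<bullet> t)^2 + (det2 t x)^2 = 1"
  unfolding inner_vec2 det2_def by algebra

lemma inner_unit_frame: "t \<bullet> t = 1 \<Longrightarrow> x \<bullet> y = (x \<bullet> t) * (y \<bullet> t) + det2 t x * det2 t y"
  unfolding inner_vec2 det2_def by algebra

lemma det2_unit_frame: "t \<bullet> t = 1 \<Longrightarrow> det2 x y = (x \<bullet> t) * det2 t y - det2 t x * (t \<bullet> y)"
  unfolding inner_vec2 det2_def by algebra

lemma inner_two_unit_frames:
  "P \<bullet> P = 1 \<Longrightarrow> Q \<bullet> Q = 1 \<Longrightarrow> X \<bullet> Y = (X \<bullet> P) * (Y \<bullet> Q) * (P \<bullet> Q)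
     - (X \<bullet> P) * det2 Q Y * det2 P Q + det2 P X * (Y \<bullet> Q) * det2 P Q + det2 P X * det2 Q Y * (P \<bullet> Q)"
  unfolding inner_vec2 det2_def by algebra

lemma unit_inner_abs_le: "(x::real^2) \<bullet> x = 1 \<Longrightarrow> y \<bullet> y = 1 \<Longrightarrow> \<bar>x \<bullet> y\<bar> \<le> 1"
  by (metis Cauchy_Schwarz_ineq2 norm_eq_sqrt_inner real_sqrt_one mult_1)

lemma unit_det2_abs_le: "x \<bullet> x = 1 \<Longrightarrow> y \<bullet> y = 1 \<Longrightarrow> \<bar>det2 x y\<bar> \<le> 1"
  by (metis abs_le_square_iff abs_one le_add_same_cancel2 inner_sq_add_det2_sq power_one zero_le_power2)

lemma det2_sq_le_via_pivot:
  assumes "t \<bullet> t = 1" "s \<bullet> s = 1" "x \<bullet> x = 1" "\<bar>t \<bullet> s\<bar> \<le> g" "\<bar>s \<bullet> x\<bar> \<le> g"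
  shows "(det2 t x)^2 \<le> 4 * g^2"
proof -
  have "\<bar>t \<bullet> s\<bar> * \<bar>det2 s x\<bar> \<le> g * 1" "\<bar>det2 s t\<bar> * \<bar>s \<bullet> x\<bar> \<le> 1 * g"
    using assms unit_det2_abs_le[of s x] unit_det2_abs_le[of s t] by (intro mult_mono; simp)+
  moreover have "det2 t x = (t \<bullet> s) * det2 s x - det2 s t * (s \<bullet> x)"
    using det2_unit_frame[OF assms(2)] .
  ultimately have "\<bar>det2 t x\<bar> \<le> \<bar>2 * g\<bar>"
    using abs_triangle_ineq4[of "(t \<bullet> s) * det2 s x" "det2 s t * (s \<bullet> x)"] by (simp add: abs_mult)
  then show ?thesis by (simp add: abs_le_square_iff power_mult_distrib)
qed

lemma det2_sq_le_if_inner_ge: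
  "x \<bullet> x = 1 \<Longrightarrow> t \<bullet> t = 1 \<Longrightarrow> 0 \<le> a \<Longrightarrow> a \<le> \<bar>x \<bullet> t\<bar> \<Longrightarrow> (det2 t x)^2 \<le> 1 - a^2"
  using inner_sq_add_det2_sq[of x t] power_mono[of a "\<bar>x \<bullet> t\<bar>" 2] by simp

lemma det2_sq_ge_if_inner_le:
  "x \<bullet> x = 1 \<Longrightarrow> t \<bullet> t = 1 \<Longrightarrow> \<bar>x \<bullet> t\<bar> \<le> a \<Longrightarrow> 1 - a^2 \<le> (det2 t x)^2"
  using inner_sq_add_det2_sq[of x t] power_mono[of "\<bar>x \<bullet> t\<bar>" a 2] by simp

text \<open>The pairs \<open>(x, b)\<close>, \<open>(y, d)\<close>, \<open>(g, D)\<close> are cosine and sine of \<open>X\<close> against \<open>P\<close>,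
  of \<open>Y\<close> against \<open>Q\<close> and of \<open>Q\<close> against \<open>P\<close>; the sum is \<open>X \<bullet> Y\<close> by \<open>inner_two_unit_frames\<close>.\<close>

lemma two_frame_expansion_pos:
  fixes x y b d g D :: real
  assumes "x \<ge> 0" "y \<ge> 0" "x^2 + b^2 = 1" "y^2 + d^2 = 1" "g^2 + D^2 = 1" "g > 0"
    and "\<bar>b\<bar> \<le> g / 4" "\<bar>d\<bar> \<le> g / 4"
  shows "x * y * g - x * d * D + b * y * D + b * d * g > 0"
proof -
  have le1: "\<bar>z\<bar> \<le> 1" if "z^2 + w^2 = 1" for z w :: real
    using that abs_le_square_iff[of z 1] by (smt (verit) one_power2 zero_le_power2)
  have g: "g \<le> 1" and x: "x \<le> 1" and y: "y \<le> 1" and D: "\<bar>D\<bar> \<le> 1"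
    using le1[of g D] le1[of x b] le1[of y d] le1[of D g] assms(3-5) by (auto simp: add.commute)
  have near: "z \<ge> 15/16" if "0 \<le> z" "z \<le> 1" "z^2 + w^2 = 1" "\<bar>w\<bar> \<le> 1/4" for z w :: real
  proof -
    have "\<bar>w\<bar>^2 \<le> (1/4)^2" using that(4) by (intro power_mono) auto
    moreover have "z^2 \<le> z" using that(1,2) by (simp add: power2_eq_square mult_left_le)
    ultimately show ?thesis using that(3) by (simp add: power_divide)
  qed
  have "x \<ge> 15/16" "y \<ge> 15/16" using near[of x b] near[of y d] assms g x y by auto
  hence "x * y * g \<ge> 15/16 * (15/16) * g" using assms(6) by (intro mult_right_mono mult_mono) auto
  moreover have "\<bar>x * d * D\<bar> \<le> 1 * (g / 4) * 1"
    unfolding abs_mult using assms(1,6,8) x D by (intro mult_mono) auto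
  moreover have "\<bar>b * y * D\<bar> \<le> (g / 4) * 1 * 1"
    unfolding abs_mult using assms(2,6,7) y D by (intro mult_mono) auto
  moreover have "\<bar>b * d * g\<bar> \<le> (1 / 4) * (g / 4) * 1"
    unfolding abs_mult using assms(6-8) g by (intro mult_mono) auto
  ultimately show ?thesis using assms(6) unfolding abs_le_iff by linarith
qed

lemma inner_pos_near_anchors:
  assumes "P \<bullet> P = 1" "Q \<bullet> Q = 1" "X \<bullet> X = 1" "Y \<bullet> Y = 1"
    and "0 \<le> X \<bullet> P" "0 \<le> Y \<bullet> Q" "0 < P \<bullet> Q"
    and "(det2 P X)^2 \<le> (P \<bullet> Q)^2 / 16" "(det2 Q Y)^2 \<le> (P \<bullet> Q)^2 / 16"
  shows "0 < X \<bullet> Y"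
proof -
  have "(P \<bullet> Q)^2 + (det2 P Q)^2 = 1"
    using inner_sq_add_det2_sq[OF assms(2,1)] by (simp add: inner_commute)
  moreover have "\<bar>det2 P X\<bar> \<le> \<bar>(P \<bullet> Q) / 4\<bar>" "\<bar>det2 Q Y\<bar> \<le> \<bar>(P \<bullet> Q) / 4\<bar>"
    unfolding abs_le_square_iff using assms(8,9) by (simp_all add: power_divide)
  ultimately show ?thesis
    using two_frame_expansion_pos[of "X \<bullet> P" "Y \<bullet> Q" "det2 P X" "det2 Q Y" "P \<bullet> Q" "det2 P Q"]
      inner_two_unit_frames[OF assms(1,2), of X Y] inner_sq_add_det2_sq[OF assms(3,1)]
      inner_sq_add_det2_sq[OF assms(4,2)] assms(5-7)
    by simp
qed

lemma sgn_mult_self_nonneg: "0 \<le> sgn x * (x::real)"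
  by (simp add: sgn_if)

lemma strictly_convex_near_anchors:
  assumes P: "P \<bullet> P = 1" and Q: "Q \<bullet> Q = 1" and PQ: "0 < P \<bullet> Q"
    and near: "\<And>i. i < n \<Longrightarrow>
      V i \<bullet> V i = 1 \<and> (T i = P \<or> T i = Q) \<and> (det2 (T i) (V i))^2 \<le> (P \<bullet> Q)^2 / 16"
  shows "strictly_convex n V"
proof -
  have PQ1: "(P \<bullet> Q)^2 \<le> 1"
    using unit_inner_abs_le[OF P Q] by (simp add: abs_square_le_1)
  have T: "T i \<bullet> T i = 1" if "i < n" for i
    using near[OF that] P Q by auto
  have TT: "T i \<bullet> T j = 1 \<or> T i \<bullet> T j = P \<bullet> Q" if "i < n" "j < n" for i j
    using near[OF that(1)] near[OF that(2)] P Q by (auto simp: inner_commute)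
  then have TT_pos: "0 < T i \<bullet> T j" and TT_ge: "(P \<bullet> Q)^2 / 16 \<le> (T i \<bullet> T j)^2 / 16"
    if "i < n" "j < n" for i j
    using that PQ PQ1 by (metis divide_right_mono power_one zero_less_one zero_le_numeral order_refl)+
  have V: "V i \<bullet> V i = 1" and "(det2 (T i) (V i))^2 < 1" if "i < n" for i
    using near[OF that] PQ1 by auto
  then have nz: "V i \<bullet> T i \<noteq> 0" if "i < n" for i
    using inner_sq_add_det2_sq[OF V T] that by fastforce
  define b where "b i = sgn (V i \<bullet> T i)" for i
  have bsq: "b i * b i = 1" if "i < n" for i
    using nz[OF that] by (simp add: b_def sgn_if)
  have X: "(b i *\<^sub>R V i) \<bullet> (b i *\<^sub>R V i) = 1" "0 \<le> (b i *\<^sub>R V i) \<bullet> T i"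
    "(det2 (T i) (b i *\<^sub>R V i))^2 \<le> (P \<bullet> Q)^2 / 16" if "i < n" for i
    using bsq[OF that] V[OF that] near[OF that] sgn_mult_self_nonneg[of "V i \<bullet> T i"]
    by (auto simp: b_def power_mult_distrib simp flip: mult.assoc power2_eq_square)
  show ?thesis unfolding strictly_convex_def
  proof (intro exI[of _ b] conjI allI impI)
    show "b i = 1 \<or> b i = -1" if "i < n" for i
      using nz[OF that] by (auto simp: b_def sgn_if)
    show "0 < (b i *\<^sub>R V i) \<bullet> (b j *\<^sub>R V j)" if "i < n" "j < n" for i j
      using inner_pos_near_anchors[OF T[OF that(1)] T[OF that(2)] X(1)[OF that(1)] X(1)[OF that(2)]
          X(2)[OF that(1)] X(2)[OF that(2)] TT_pos[OF that]]
        X(3)[OF that(1)] X(3)[OF that(2)] TT_ge[OF that]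
      by linarith
  qed
qed

lemma inner_abs_ge_half_if_near:
  fixes t x y :: "real^2"
  assumes t: "t \<bullet> t = 1" and x: "x \<bullet> x = 1" and y: "y \<bullet> y = 1"
    and "255/256 \<le> \<bar>x \<bullet> t\<bar>" "255/256 \<le> \<bar>y \<bullet> t\<bar>"
  shows "1/2 \<le> \<bar>x \<bullet> y\<bar>"
proof -
  have "\<bar>det2 t x\<bar> \<le> \<bar>1/8\<bar>" "\<bar>det2 t y\<bar> \<le> \<bar>1/8\<bar>"
    unfolding abs_le_square_iff
    using det2_sq_le_if_inner_ge[OF x t, of "255/256"] det2_sq_le_if_inner_ge[OF y t, of "255/256"] assms(4,5)
    by (simp_all add: power2_eq_square)
  then have "\<bar>det2 t x\<bar> * \<bar>det2 t y\<bar> \<le> 1/8 * (1/8)"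
    by (intro mult_mono) auto
  moreover have "255/256 * (255/256) \<le> \<bar>x \<bullet> t\<bar> * \<bar>y \<bullet> t\<bar>"
    using assms(4,5) by (intro mult_mono) auto
  moreover have "\<bar>x \<bullet> t\<bar> * \<bar>y \<bullet> t\<bar> - \<bar>det2 t x\<bar> * \<bar>det2 t y\<bar> \<le> \<bar>x \<bullet> y\<bar>"
    using abs_triangle_ineq2[of "(x \<bullet> t) * (y \<bullet> t)" "- (det2 t x * det2 t y)"]
      inner_unit_frame[OF t, of x y] by (simp add: abs_mult)
  ultimately show ?thesis by linarith
qed

lemma inner_abs_ge_half_if_far:
  fixes t x y :: "real^2"
  assumes t: "t \<bullet> t = 1" and x: "x \<bullet> x = 1" and y: "y \<bullet> y = 1"
    and "\<bar>x \<bullet> t\<bar> \<le> 1/256" "\<bar>y \<bullet> t\<bar> \<le> 1/256"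
  shows "1/2 \<le> \<bar>x \<bullet> y\<bar>"
proof -
  have "\<bar>3/4\<bar> \<le> \<bar>det2 t x\<bar>" "\<bar>3/4\<bar> \<le> \<bar>det2 t y\<bar>"
    unfolding abs_le_square_iff
    using det2_sq_ge_if_inner_le[OF x t, of "1/256"] det2_sq_ge_if_inner_le[OF y t, of "1/256"] assms(4,5)
    by (simp_all add: power2_eq_square)
  then have "3/4 * (3/4) \<le> \<bar>det2 t x\<bar> * \<bar>det2 t y\<bar>"
    by (intro mult_mono) auto
  moreover have "\<bar>x \<bullet> t\<bar> * \<bar>y \<bullet> t\<bar> \<le> 1/256 * (1/256)"
    using assms(4,5) by (intro mult_mono) auto
  moreover have "\<bar>det2 t x\<bar> * \<bar>det2 t y\<bar> - \<bar>x \<bullet> t\<bar> * \<bar>y \<bullet> t\<bar> \<le> \<bar>x \<bullet> y\<bar>"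
    using abs_triangle_ineq2[of "det2 t x * det2 t y" "- ((x \<bullet> t) * (y \<bullet> t))"]
      inner_unit_frame[OF t, of x y] by (simp add: abs_mult add.commute)
  ultimately show ?thesis by linarith
qed

lemma abs_inner_eq_1_if_orthogonal_to_unit:
  fixes t x y :: "real^2"
  assumes "t \<bullet> t = 1" "x \<bullet> x = 1" "y \<bullet> y = 1" "x \<bullet> t = 0" "y \<bullet> t = 0"
  shows "\<bar>x \<bullet> y\<bar> = 1"
proof -
  have "(det2 t x)^2 = 1" "(det2 t y)^2 = 1"
    using inner_sq_add_det2_sq[of x t] inner_sq_add_det2_sq[of y t] assms by auto
  then have "(x \<bullet> y)^2 = 1"
    using inner_unit_frame[OF assms(1), of x y] assms(4,5) by (simp add: power_mult_distrib)
  then show ?thesis by (auto simp: power2_eq_1_iff)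
qed

lemma exists_cross_pair_nonorthogonal:
  fixes u :: "nat \<Rightarrow> real^2"
  assumes unit: "\<And>i. i < n \<Longrightarrow> u i \<bullet> u i = 1"
    and i0: "i0 < n" and j0: "j0 < n" and "0 < \<bar>u i0 \<bullet> u j0\<bar>" "\<bar>u i0 \<bullet> u j0\<bar> < 1"
    and a: "a < n" "C a" and b: "b < n" "\<not> C b"
  shows "\<exists>i<n. \<exists>j<n. C i \<and> \<not> C j \<and> u i \<bullet> u j \<noteq> 0"
proof (rule ccontr)
  assume "\<not> ?thesis"
  then have orth: "u i \<bullet> u j = 0" if "i < n" "j < n" "C i \<noteq> C j" for i j
    using that by (metis inner_commute)
  consider "C i0 \<noteq> C j0" | "C i0" "C j0" | "\<not> C i0" "\<not> C j0" by blast
  then show False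
  proof cases
    case 1
    then show False using orth[OF i0 j0] assms(4) by simp
  next
    case 2
    then show False
      using abs_inner_eq_1_if_orthogonal_to_unit[OF unit[OF b(1)] unit[OF i0] unit[OF j0]]
        orth[OF i0 b(1)] orth[OF j0 b(1)] b(2) assms(5) by simp
  next
    case 3
    then show False
      using abs_inner_eq_1_if_orthogonal_to_unit[OF unit[OF a(1)] unit[OF i0] unit[OF j0]]
        orth[OF i0 a(1)] orth[OF j0 a(1)] a(2) assms(5) by simp
  qed
qed

lemma stable_mult_self_nonneg: "stable f \<Longrightarrow> \<bar>a\<bar> \<le> 1 \<Longrightarrow> 0 \<le> f a * a"
proof -
  assume "stable f" "\<bar>a\<bar> \<le> 1"
  then have "sgn (f a) = sgn a" by (auto simp: stable_def abs_le_iff)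
  then show "0 \<le> f a * a"
    by (cases a "0::real" rule: linorder_cases)
      (auto simp: sgn_if split: if_splits intro: mult_nonpos_nonpos)
qed

lemma stable_abs_bounded_below:
  assumes "stable f"
  obtains c where "0 < c" "\<And>a. 1/2 \<le> \<bar>a\<bar> \<Longrightarrow> \<bar>a\<bar> \<le> 1 \<Longrightarrow> c \<le> \<bar>f a\<bar>"
proof -
  define S :: "real set" where "S = {-1..-1/2} \<union> {1/2..1}"
  have S: "compact S" "S \<noteq> {}" "S \<subseteq> {-1..1}" "0 \<notin> S"
    by (auto simp: S_def)
  have "continuous_on S (\<lambda>a. \<bar>f a\<bar>)"
    using assms S(3) unfolding stable_def by (auto intro: continuous_intros continuous_on_subset)
  then obtain a0 where a0: "a0 \<in> S" "\<And>a. a \<in> S \<Longrightarrow> \<bar>f a0\<bar> \<le> \<bar>f a\<bar>"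
    using continuous_attains_inf[OF S(1,2)] by blast
  have "sgn (f a0) = sgn a0" "a0 \<noteq> 0"
    using assms a0(1) S(3,4) unfolding stable_def by auto
  then have "0 < \<bar>f a0\<bar>" by (auto simp: sgn_0_0)
  moreover have "a \<in> S" if "1/2 \<le> \<bar>a\<bar>" "\<bar>a\<bar> \<le> 1" for a
    using that by (auto simp: S_def abs_if split: if_splits)
  ultimately show ?thesis using that a0(2) by blast
qed

definition pull :: "(real \<Rightarrow> real) \<Rightarrow> real^2 \<Rightarrow> real^2 \<Rightarrow> real^2" where
  "pull f t v = (let w = v + f (v \<bullet> t) *\<^sub>R t in w /\<^sub>R norm w)"

lemma intervene_Pair: "intervene f U (i, j) = U(i := pull f (U j) (U i))"
  by (simp add: intervene_def pull_def Let_def)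

lemma foldl_intervene_replicate:
  "i \<noteq> j \<Longrightarrow> foldl (intervene f) U (replicate k (i, j)) = U(i := (pull f (U j) ^^ k) (U i))"
proof (induction k arbitrary: U)
  case (Suc k)
  then show ?case
    by (simp add: intervene_Pair funpow_Suc_right fun_eq_iff del: funpow.simps)
qed simp

lemma pull_unit_det2_contract:
  assumes v: "v \<bullet> v = 1" and t: "t \<bullet> t = 1" and sign: "0 \<le> f (v \<bullet> t) * (v \<bullet> t)"
  shows "pull f t v \<bullet> pull f t v = 1"
    and "(det2 t (pull f t v))^2 * (1 + (f (v \<bullet> t))^2) \<le> (det2 t v)^2"
proof -
  define c where "c = f (v \<bullet> t)"
  define w where "w = v + c *\<^sub>R t"
  have "w \<bullet> w = 1 + 2 * (c * (v \<bullet> t)) + c^2"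
    using v t unfolding w_def by (simp add: inner_add inner_commute power2_eq_square algebra_simps)
  then have ww: "1 + c^2 \<le> w \<bullet> w" using sign by (simp add: c_def)
  then have "0 < w \<bullet> w" by (smt (verit) zero_le_power2)
  then have nw: "(norm w)^2 = w \<bullet> w" "0 < norm w"
    by (simp_all add: power2_norm_eq_inner)
  have pw: "pull f t v = (1 / norm w) *\<^sub>R w"
    by (simp add: pull_def w_def c_def Let_def inverse_eq_divide)
  show "pull f t v \<bullet> pull f t v = 1"
    using nw unfolding pw by (simp add: power2_eq_square)
  have "det2 t (pull f t v) = det2 t v / norm w"
    unfolding pw by (simp add: w_def)
  then have "(det2 t (pull f t v))^2 * (1 + c^2) = (det2 t v)^2 * ((1 + c^2) / (w \<bullet> w))"
    using nw by (simp add: power_divide)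
  also have "\<dots> \<le> (det2 t v)^2 * 1"
    using ww by (intro mult_left_mono) (auto simp: divide_le_eq_1)
  finally show "(det2 t (pull f t v))^2 * (1 + (f (v \<bullet> t))^2) \<le> (det2 t v)^2"
    by (simp add: c_def)
qed

lemma funpow_pull_det2_contract:
  assumes sign: "\<And>a. \<bar>a\<bar> \<le> 1 \<Longrightarrow> 0 \<le> f a * a"
    and lower: "\<And>a. 1/2 \<le> \<bar>a\<bar> \<Longrightarrow> \<bar>a\<bar> \<le> 1 \<Longrightarrow> c \<le> \<bar>f a\<bar>" and "0 \<le> c"
    and v: "v \<bullet> v = 1" and t: "t \<bullet> t = 1" and vt: "1/2 \<le> \<bar>v \<bullet> t\<bar>"
  shows "(pull f t ^^ m) v \<bullet> (pull f t ^^ m) v = 1 \<and>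
    (det2 t ((pull f t ^^ m) v))^2 \<le> (1 / (1 + c^2))^m * (det2 t v)^2"
proof (induction m)
  case (Suc m)
  define V where "V = (pull f t ^^ m) v"
  have V: "V \<bullet> V = 1" and dV: "(det2 t V)^2 \<le> (1 / (1 + c^2))^m * (det2 t v)^2"
    using Suc by (simp_all add: V_def)
  have "(1 / (1 + c^2))^m * (det2 t v)^2 \<le> 1 * (det2 t v)^2"
    by (intro mult_right_mono power_le_one) (auto simp: add_pos_nonneg)
  \<comment> \<open>The sine to \<open>t\<close> only shrinks, so \<open>V\<close> stays in the region where \<open>|f| \<ge> c\<close>.\<close>
  then have "(det2 t V)^2 \<le> (det2 t v)^2" using dV by linarith
  then have "\<bar>v \<bullet> t\<bar>^2 \<le> \<bar>V \<bullet> t\<bar>^2"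
    using inner_sq_add_det2_sq[OF V t] inner_sq_add_det2_sq[OF v t] by simp
  then have "1/2 \<le> \<bar>V \<bullet> t\<bar>" using vt power2_le_imp_le[of "\<bar>v \<bullet> t\<bar>" "\<bar>V \<bullet> t\<bar>"] by simp
  moreover have Vt: "\<bar>V \<bullet> t\<bar> \<le> 1" using unit_inner_abs_le[OF V t] .
  ultimately have "c^2 \<le> (f (V \<bullet> t))^2"
    using lower \<open>0 \<le> c\<close> by (metis power2_abs power_mono)
  then have "(det2 t (pull f t V))^2 * (1 + c^2) \<le> (det2 t (pull f t V))^2 * (1 + (f (V \<bullet> t))^2)"
    by (intro mult_left_mono) auto
  also have "\<dots> \<le> (det2 t V)^2"
    using pull_unit_det2_contract(2)[where f=f, OF V t sign[OF Vt]] .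
  also have "\<dots> \<le> (1 / (1 + c^2))^m * (det2 t v)^2" by (fact dV)
  finally have "(det2 t (pull f t V))^2 \<le> (1 / (1 + c^2))^Suc m * (det2 t v)^2"
    by (simp add: field_simps add_pos_nonneg)
  then show ?case
    using pull_unit_det2_contract(1)[where f=f, OF V t sign[OF Vt]] by (simp add: V_def)
qed (simp add: v)

lemma funpow_pull_det2_small:
  assumes sign: "\<And>a. \<bar>a\<bar> \<le> 1 \<Longrightarrow> 0 \<le> f a * a"
    and lower: "\<And>a. 1/2 \<le> \<bar>a\<bar> \<Longrightarrow> \<bar>a\<bar> \<le> 1 \<Longrightarrow> c \<le> \<bar>f a\<bar>" and "0 \<le> c"
    and k: "(1 / (1 + c^2))^k \<le> 1/64"
    and x: "x \<bullet> x = 1" and t: "t \<bullet> t = 1" and s: "s \<bullet> s = 1"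
    and "1/2 \<le> \<bar>x \<bullet> t\<bar>" "\<bar>t \<bullet> s\<bar> \<le> g" "\<bar>s \<bullet> x\<bar> \<le> g"
  shows "(pull f t ^^ k) x \<bullet> (pull f t ^^ k) x = 1 \<and> (det2 t ((pull f t ^^ k) x))^2 \<le> g^2 / 16"
proof -
  note contract = funpow_pull_det2_contract[OF sign lower \<open>0 \<le> c\<close> x t \<open>1/2 \<le> \<bar>x \<bullet> t\<bar>\<close>, of k]
  have "(1 / (1 + c^2))^k * (det2 t x)^2 \<le> 1/64 * (4 * g^2)"
    using k det2_sq_le_via_pivot[OF t s x assms(9,10)] by (intro mult_mono) auto
  then show ?thesis using contract by auto
qed

definition pull_schedule :: "(nat \<Rightarrow> nat) \<Rightarrow> nat \<Rightarrow> nat \<Rightarrow> (nat \<times> nat) list" where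
  "pull_schedule a k m = concat (map (\<lambda>i. if a i = i then [] else replicate k (i, a i)) [0..<m])"

lemma length_pull_schedule_le: "length (pull_schedule a k m) \<le> m * k"
  by (induction m) (auto simp: pull_schedule_def)

lemma valid_pull_schedule:
  "(\<And>i. i < m \<Longrightarrow> a i < m) \<Longrightarrow> ij \<in> set (pull_schedule a k m) \<Longrightarrow> valid_intervention m ij"
  by (auto simp: pull_schedule_def valid_intervention_def split: if_splits)

lemma apply_pull_schedule:
  assumes "\<And>i. a (a i) = a i"
  shows "apply_interventions f U (pull_schedule a k m) =
    (\<lambda>i. if i < m \<and> a i \<noteq> i then (pull f (U (a i)) ^^ k) (U i) else U i)"
proof (induction m)
  case (Suc m)
  let ?W = "apply_interventions f U (pull_schedule a k m)"
  have "?W (a m) = U (a m)" "?W m = U m"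
    using assms[of m] by (simp_all add: Suc)
  then show ?case
    using Suc foldl_intervene_replicate[of m "a m" f ?W k]
    by (auto simp: apply_interventions_def pull_schedule_def fun_eq_iff less_Suc_eq)
qed (simp add: apply_interventions_def pull_schedule_def)

lemma strictly_convex_after_pulls:
  fixes u :: config
  assumes sign: "\<And>a. \<bar>a\<bar> \<le> 1 \<Longrightarrow> 0 \<le> f a * a"
    and lower: "\<And>a. 1/2 \<le> \<bar>a\<bar> \<Longrightarrow> \<bar>a\<bar> \<le> 1 \<Longrightarrow> c \<le> \<bar>f a\<bar>" and "0 \<le> c"
    and k: "(1 / (1 + c^2))^k \<le> 1/64"
    and unit: "\<And>i. i < n \<Longrightarrow> u i \<bullet> u i = 1"
    and p: "p < n" "C p" and q: "q < n" "\<not> C q"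
    and within: "\<And>i j. i < n \<Longrightarrow> j < n \<Longrightarrow> C i = C j \<Longrightarrow> 1/2 \<le> \<bar>u i \<bullet> u j\<bar>"
    and cross: "\<And>i j. i < n \<Longrightarrow> j < n \<Longrightarrow> C i \<Longrightarrow> \<not> C j \<Longrightarrow> \<bar>u i \<bullet> u j\<bar> \<le> \<bar>u p \<bullet> u q\<bar>"
    and pq: "u p \<bullet> u q \<noteq> 0"
  shows "\<exists>s. length s \<le> n * k \<and> (\<forall>ij\<in>set s. valid_intervention n ij) \<and>
    strictly_convex n (apply_interventions f u s)"
proof -
  define g where "g = \<bar>u p \<bullet> u q\<bar>"
  define \<sigma> where "\<sigma> = sgn (u p \<bullet> u q)"
  define a where "a i = (if i = p \<or> i = q then i else if C i then p else q)" for i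
  \<comment> \<open>Orienting the second anchor by \<open>\<sigma>\<close> makes the anchors' inner product \<open>g > 0\<close>.\<close>
  define T where "T i = (if C i then u p else \<sigma> *\<^sub>R u q)" for i
  define V where "V = apply_interventions f u (pull_schedule a k n)"
  have "p \<noteq> q" using p q by auto
  have \<sigma>: "\<sigma> * \<sigma> = 1" using pq by (simp add: \<sigma>_def sgn_if)
  have V_eq: "V = (\<lambda>i. if i < n \<and> a i \<noteq> i then (pull f (u (a i)) ^^ k) (u i) else u i)"
    unfolding V_def by (rule apply_pull_schedule) (simp add: a_def)
  have near: "V i \<bullet> V i = 1 \<and> (T i = u p \<or> T i = \<sigma> *\<^sub>R u q) \<and> (det2 (T i) (V i))^2 \<le> g^2 / 16"
    if i: "i < n" for i
  proof (cases "i = p \<or> i = q")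
    case True
    then show ?thesis using \<open>p \<noteq> q\<close> i p q unit by (auto simp: V_eq a_def T_def)
  next
    case False
    define t where "t = u (if C i then p else q)"
    define s where "s = u (if C i then q else p)"
    have "(pull f t ^^ k) (u i) \<bullet> (pull f t ^^ k) (u i) = 1 \<and> (det2 t ((pull f t ^^ k) (u i)))^2 \<le> g^2 / 16"
    proof (rule funpow_pull_det2_small[OF sign lower \<open>0 \<le> c\<close> k unit[OF i]])
      show "t \<bullet> t = 1" "s \<bullet> s = 1" using p q unit by (simp_all add: t_def s_def)
      show "1/2 \<le> \<bar>u i \<bullet> t\<bar>" using within[OF i] p q by (simp add: t_def)
      show "\<bar>t \<bullet> s\<bar> \<le> g" by (simp add: t_def s_def g_def inner_commute)
      show "\<bar>s \<bullet> u i\<bar> \<le> g"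
        using cross[OF i q(1)] cross[OF p(1) i] p q by (auto simp: s_def g_def inner_commute)
    qed
    moreover have "V i = (pull f t ^^ k) (u i)" "det2 (T i) w = (if C i then 1 else \<sigma>) * det2 t w" for w
      using False i by (simp_all add: V_eq a_def t_def T_def)
    ultimately show ?thesis
      using \<sigma> by (auto simp: T_def power_mult_distrib simp flip: power2_eq_square)
  qed
  have "u p \<bullet> (\<sigma> *\<^sub>R u q) = g"
    by (simp add: \<sigma>_def g_def sgn_if)
  moreover have "(\<sigma> *\<^sub>R u q) \<bullet> (\<sigma> *\<^sub>R u q) = 1" using \<sigma> unit[OF q(1)] by simp
  ultimately have "strictly_convex n V"
    using strictly_convex_near_anchors[OF unit[OF p(1)], of "\<sigma> *\<^sub>R u q" n V T] near pq
    by (simp add: g_def)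
  moreover have "length (pull_schedule a k n) \<le> n * k" by (rule length_pull_schedule_le)
  moreover have "\<forall>ij\<in>set (pull_schedule a k n). valid_intervention n ij"
    using p q by (intro ballI valid_pull_schedule) (auto simp: a_def)
  ultimately show ?thesis unfolding V_def by blast
qed

lemma eps_inactive_two_clusters:
  fixes u :: config
  assumes unit: "\<And>i. i < n \<Longrightarrow> u i \<bullet> u i = 1" and "0 < n" and inactive: "eps_inactive (1/256) n u"
  shows "\<And>i. i < n \<Longrightarrow> 1/2 \<le> \<bar>u i \<bullet> u 0\<bar> \<Longrightarrow> 255/256 \<le> \<bar>u i \<bullet> u 0\<bar>"
    and "\<And>i j. i < n \<Longrightarrow> j < n \<Longrightarrow> (1/2 \<le> \<bar>u i \<bullet> u 0\<bar>) = (1/2 \<le> \<bar>u j \<bullet> u 0\<bar>) \<Longrightarrow>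
      1/2 \<le> \<bar>u i \<bullet> u j\<bar>"
proof -
  have gap: "\<bar>u i \<bullet> u 0\<bar> \<le> 1/256 \<or> 255/256 \<le> \<bar>u i \<bullet> u 0\<bar>" if "i < n" for i
    using inactive that \<open>0 < n\<close> unfolding eps_inactive_def eps_active_def by force
  then show near: "255/256 \<le> \<bar>u i \<bullet> u 0\<bar>" if "i < n" "1/2 \<le> \<bar>u i \<bullet> u 0\<bar>" for i
    using that by force
  show "1/2 \<le> \<bar>u i \<bullet> u j\<bar>"
    if "i < n" "j < n" "(1/2 \<le> \<bar>u i \<bullet> u 0\<bar>) = (1/2 \<le> \<bar>u j \<bullet> u 0\<bar>)" for i j
  proof (cases "1/2 \<le> \<bar>u i \<bullet> u 0\<bar>")
    case True
    then show ?thesis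
      using that inner_abs_ge_half_if_near[OF unit[OF \<open>0 < n\<close>] unit[OF that(1)] unit[OF that(2)]] near
      by simp
  next
    case False
    then have "\<bar>u i \<bullet> u 0\<bar> \<le> 1/256" "\<bar>u j \<bullet> u 0\<bar> \<le> 1/256"
      using that gap[OF that(1)] gap[OF that(2)] by auto
    then show ?thesis
      using inner_abs_ge_half_if_far[OF unit[OF \<open>0 < n\<close>] unit[OF that(1)] unit[OF that(2)]] by simp
  qed
qed

lemma strictly_convex_reachable_if_inactive:
  assumes sign: "\<And>a. \<bar>a\<bar> \<le> 1 \<Longrightarrow> 0 \<le> f a * a"
    and lower: "\<And>a. 1/2 \<le> \<bar>a\<bar> \<Longrightarrow> \<bar>a\<bar> \<le> 1 \<Longrightarrow> c \<le> \<bar>f a\<bar>" and "0 \<le> c"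
    and k: "(1 / (1 + c^2))^k \<le> 1/64"
    and u: "is_config n u" "eps_inactive (1/256) n u" "active n u"
  shows "\<exists>s. length s \<le> n * k \<and> (\<forall>ij\<in>set s. valid_intervention n ij) \<and>
    strictly_convex n (apply_interventions f u s)"
proof -
  have unit: "u i \<bullet> u i = 1" if "i < n" for i
    using u(1) that by (simp add: is_config_def norm_eq_1)
  obtain i0 j0 where i0: "i0 < n" "j0 < n" "0 < \<bar>u i0 \<bullet> u j0\<bar>" "\<bar>u i0 \<bullet> u j0\<bar> < 1"
    using u(3) unfolding active_def eps_active_def by auto
  then have "0 < n" by simp
  define C where "C i \<longleftrightarrow> 1/2 \<le> \<bar>u i \<bullet> u 0\<bar>" for i
  have near: "255/256 \<le> \<bar>u i \<bullet> u 0\<bar>" if "i < n" "C i" for i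
    using eps_inactive_two_clusters(1)[of n u i] unit \<open>0 < n\<close> u(2) that unfolding C_def by blast
  have within: "1/2 \<le> \<bar>u i \<bullet> u j\<bar>" if "i < n" "j < n" "C i = C j" for i j
    using eps_inactive_two_clusters(2)[of n u i j] unit \<open>0 < n\<close> u(2) that unfolding C_def by blast
  show ?thesis
  proof (cases "\<forall>i<n. C i")
    case True
    have "(det2 (u 0) (u i))^2 \<le> (u 0 \<bullet> u 0)^2 / 16" if "i < n" for i
      using det2_sq_le_if_inner_ge[OF unit[OF that] unit[OF \<open>0 < n\<close>], of "255/256"]
        near[OF that] True that unit[OF \<open>0 < n\<close>] by (simp add: power2_eq_square)
    then have "strictly_convex n u"
      using strictly_convex_near_anchors[of "u 0" "u 0" n u "\<lambda>_. u 0"] unit \<open>0 < n\<close> by auto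
    then show ?thesis by (intro exI[of _ "[]"]) (simp add: apply_interventions_def)
  next
    case False
    then obtain b where b: "b < n" "\<not> C b" by auto
    have C0: "C 0" using unit[OF \<open>0 < n\<close>] by (simp add: C_def)
    define S where "S = {(i, j). i < n \<and> j < n \<and> C i \<and> \<not> C j}"
    have "finite S" by (rule finite_subset[of _ "{..<n} \<times> {..<n}"]) (auto simp: S_def)
    moreover have "(0, b) \<in> S" using \<open>0 < n\<close> b C0 by (simp add: S_def)
    ultimately obtain p q where pq: "(p, q) \<in> S" "\<And>i j. (i, j) \<in> S \<Longrightarrow> \<bar>u i \<bullet> u j\<bar> \<le> \<bar>u p \<bullet> u q\<bar>"
      using ex_is_arg_min_if_finite[of S "\<lambda>(i, j). - \<bar>u i \<bullet> u j\<bar>"]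
      by (fastforce simp: is_arg_min_linorder)
    obtain i j where "i < n" "j < n" "C i" "\<not> C j" "u i \<bullet> u j \<noteq> 0"
      using exists_cross_pair_nonorthogonal[OF unit i0 \<open>0 < n\<close> C0 b] by blast
    then have "u p \<bullet> u q \<noteq> 0" using pq(2)[of i j] by (force simp: S_def)
    then show ?thesis
      using strictly_convex_after_pulls[where p=p and q=q and C=C, OF sign lower \<open>0 \<le> c\<close> k unit] pq within
      by (auto simp: S_def)
  qed
qed

theorem mainTheorem8:
  fixes n :: nat and f :: "real \<Rightarrow> real"
  assumes "n \<ge> 2" and "stable f"
  shows "\<exists>K::nat. K > 0 \<and>
    (\<forall>U0. is_config n U0 \<and> eps_inactive (1/256) n U0 \<and> active n U0 \<longrightarrow>
       (\<exists>s. length s \<le> K \<and> (\<forall>ij\<in>set s. valid_intervention n ij) \<and>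
            strictly_convex n (apply_interventions f U0 s)))"
proof -
  obtain c where c: "0 < c" "\<And>a. 1/2 \<le> \<bar>a\<bar> \<Longrightarrow> \<bar>a\<bar> \<le> 1 \<Longrightarrow> c \<le> \<bar>f a\<bar>"
    using stable_abs_bounded_below[OF assms(2)] by blast
  have "1 / (1 + c^2) < 1" using c(1) by (simp add: add_pos_pos)
  then obtain k where k: "(1 / (1 + c^2))^k < 1/64"
    using real_arch_pow_inv[of "1/64"] by auto
  then have "0 < k" by (cases k) auto
  then show ?thesis
    using assms(1) strictly_convex_reachable_if_inactive[OF stable_mult_self_nonneg[OF assms(2)] c(2)]
      c(1) k by (intro exI[of _ "n * k"]) auto
qed

end
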